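(* Consider the UAV Persistent Service model with parameters $f>0$, $c\ge0$ and displacement times $g_1,\dots,g_N>0$ with $2g_i<f$, and let $\bar g=\frac1N\sum_{i=1}^N g_i$. Let $M_{het}$ be the minimum number of UAVs of a feasible schedule for these heterogeneous displacement times, and let $M_{hom}=N+\left\lceil\frac{c+2\bar g}{f-2\bar g}N\right\rceil$ be the minimum number of UAVs of a feasible schedule in the homogeneous instance with the same $f,c,N$ and all displacement times equal to $\bar g$. Then $M_{het}\ge M_{hom}$.
   Context: UAV Persistent Service model: there is a single recharging station (RS) and a finite set of $N$ aerial locations, served by identical UAVs. A UAV with a full battery can fly for at most $f$ time units; replacing/recharging its battery at the RS takes $c$ time units. Flying between the RS and location $i$ (either direction) takes $g_i$ time units. A UAV's activity consists of sorties: it leaves the RS fully charged, flies to one location, stays there (covering it), and flies back to the RS, with total airborne time of the sortie at most $f$; it then spends $c$ time units recharging at the RS (possibly followed by idle time) before its next sortie. At time $0$ each UAV is fully charged, either at the RS or at a location. A location is covered at time $t$ if some UAV is present at it at time $t$. A schedule is feasible if every location is covered at every time $t\ge0$. *)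

theory Defs
  imports Complex_Main
begin

text \<open>
A sortie is encoded as (i, a, l): the UAV serves location i, arriving there at
time a and leaving at time l; it departs the RS at a - g i and returns at l + g i.
A UAV plan is (at0, s): at0 says the UAV is at a location at time 0 (then its
first sortie starts at that location with a = 0, airborne from time 0);
s k is the k-th sortie (None = no more sorties; sorties form a prefix).
\<close>

type_synonym sortie = "nat \<times> real \<times> real"
type_synonym uav_plan = "bool \<times> (nat \<Rightarrow> sortie option)"

definition valid_uav ::
  "(nat \<Rightarrow> real) \<Rightarrow> real \<Rightarrow> real \<Rightarrow> nat \<Rightarrow> uav_plan \<Rightarrow> bool" where
  "valid_uav g f c N P \<longleftrightarrow>
     (let at0 = fst P; s = snd P in
       (\<forall>k. s (Suc k) \<noteq> None \<longrightarrow> s k \<noteq> None) \<and>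
       (at0 \<longrightarrow> s 0 \<noteq> None) \<and>
       (\<forall>k i a l. s k = Some (i, a, l) \<longrightarrow>
          i < N \<and> a \<le> l \<and>
          (if k = 0 \<and> at0 then a = 0 \<and> l + g i \<le> f
           else 0 \<le> a - g i \<and> (l + g i) - (a - g i) \<le> f)) \<and>
       (\<forall>k i a l i' a' l'. s k = Some (i, a, l) \<longrightarrow> s (Suc k) = Some (i', a', l') \<longrightarrow>
          l + g i + c \<le> a' - g i'))"

definition present :: "uav_plan \<Rightarrow> nat \<Rightarrow> real \<Rightarrow> bool" where
  "present P i t \<longleftrightarrow> (\<exists>k a l. snd P k = Some (i, a, l) \<and> a \<le> t \<and> t \<le> l)"

definition feasible ::
  "(nat \<Rightarrow> real) \<Rightarrow> real \<Rightarrow> real \<Rightarrow> nat \<Rightarrow> nat \<Rightarrow> (nat \<Rightarrow> uav_plan) \<Rightarrow> bool" where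
  "feasible g f c N M U \<longleftrightarrow>
     (\<forall>u<M. valid_uav g f c N (U u)) \<and>
     (\<forall>i<N. \<forall>t\<ge>0. \<exists>u<M. present (U u) i t)"

definition M_hom :: "real \<Rightarrow> real \<Rightarrow> nat \<Rightarrow> real \<Rightarrow> nat" where
  "M_hom f c N gbar = N + nat \<lceil>(c + 2 * gbar) / (f - 2 * gbar) * real N\<rceil>"

end

theory Submission
  imports Defs "HOL-Analysis.Analysis"
begin

text \<open>
  A UAV spending time \<open>x\<close> at location \<open>i\<close> in a sortie occupies \<open>x + 2 g\<^sub>i + c\<close> time units of its
  own schedule, and \<open>x \<le> f - 2 g\<^sub>i\<close>; hence \<open>(1 + \<rho>\<^sub>i) x\<close> is at most that occupied time, where
  \<open>\<rho>\<^sub>i = (c + 2 g\<^sub>i) / (f - 2 g\<^sub>i)\<close>. Up to a horizon \<open>T\<close> each UAV therefore delivers weighted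
  presence at most \<open>T + O(1)\<close>, while covering location \<open>i\<close> throughout \<open>[0, T]\<close> requires weighted
  presence at least \<open>(1 + \<rho>\<^sub>i) T\<close>. Letting \<open>T \<rightarrow> \<infinity>\<close> gives \<open>M \<ge> N + \<Sum>\<^sub>i \<rho>\<^sub>i\<close>, and
  \<open>\<Sum>\<^sub>i \<rho>\<^sub>i \<ge> N \<rho>(g\<^sub>m\<^sub>e\<^sub>a\<^sub>n)\<close> because \<open>x \<mapsto> (c + 2x) / (f - 2x)\<close> is convex.
\<close>

lemma interval_cover_length_le:
  fixes T :: real and \<alpha> \<beta> :: "'a \<Rightarrow> real"
  assumes fin: "finite F" and T: "T \<ge> 0" and ab: "\<forall>s\<in>F. \<alpha> s \<le> \<beta> s"
    and cov: "{0..T} \<subseteq> (\<Union>s\<in>F. {\<alpha> s..\<beta> s})"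
  shows "T \<le> (\<Sum>s\<in>F. \<beta> s - \<alpha> s)"
proof -
  have "ennreal T = emeasure lborel {0..T}" using T by simp
  also have "\<dots> \<le> emeasure lborel (\<Union>s\<in>F. {\<alpha> s..\<beta> s})"
    by (rule emeasure_mono) (use cov fin in auto)
  also have "\<dots> \<le> (\<Sum>s\<in>F. emeasure lborel {\<alpha> s..\<beta> s})"
    by (rule emeasure_subadditive_finite) (use fin in auto)
  also have "\<dots> = (\<Sum>s\<in>F. ennreal (\<beta> s - \<alpha> s))" using ab by (intro sum.cong) auto
  also have "\<dots> = ennreal (\<Sum>s\<in>F. \<beta> s - \<alpha> s)" by (rule sum_ennreal) (use ab in auto)
  finally show ?thesis
    by (simp add: ennreal_le_iff sum_nonneg ab)
qed

lemma le_of_linear_bound: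
  fixes a b C :: real
  assumes "\<And>T. T \<ge> 0 \<Longrightarrow> T * a \<le> T * b + C"
  shows "a \<le> b"
proof (rule ccontr)
  assume "\<not> a \<le> b"
  then have d: "a - b > 0" by simp
  define T where "T = \<bar>C\<bar> / (a - b) + 1"
  have "T \<ge> 0" unfolding T_def using d by simp
  then have "T * (a - b) \<le> C" using assms[of T] by (simp add: algebra_simps)
  moreover have "T * (a - b) = \<bar>C\<bar> + (a - b)" unfolding T_def using d by (simp add: field_simps)
  ultimately show False using d by linarith
qed

lemma add_nat_ceiling_le:
  fixes n m :: nat and x :: real
  assumes "real n + x \<le> real m" and "x \<ge> 0"
  shows "n + nat \<lceil>x\<rceil> \<le> m"
proof -
  have "\<lceil>x\<rceil> \<le> int m - int n" using assms(1) by (intro ceiling_le) simp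
  then show ?thesis using assms(2) by linarith
qed

lemma mean_less:
  fixes x :: "'a \<Rightarrow> real"
  assumes "finite I" "I \<noteq> {}" "\<forall>i\<in>I. x i < b"
  shows "(\<Sum>i\<in>I. x i) / real (card I) < b"
proof -
  have "(\<Sum>i\<in>I. x i) < (\<Sum>i\<in>I. b)" using assms by (intro sum_strict_mono) auto
  then show ?thesis using assms(1,2) by (simp add: card_gt_0_iff pos_divide_less_eq mult.commute)
qed

definition service_ratio :: "real \<Rightarrow> real \<Rightarrow> real \<Rightarrow> real" where
  "service_ratio f c x = (c + 2 * x) / (f - 2 * x)"

lemma service_ratio_nonneg: "c \<ge> 0 \<Longrightarrow> x \<ge> 0 \<Longrightarrow> 2 * x < f \<Longrightarrow> service_ratio f c x \<ge> 0"
  unfolding service_ratio_def by (simp add: divide_nonneg_pos)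

lemma service_ratio_above_tangent:
  fixes x m c f :: real
  assumes "2 * x < f" "2 * m < f" "c + f \<ge> 0"
  shows "service_ratio f c m + 2 * (c + f) / (f - 2 * m)\<^sup>2 * (x - m) \<le> service_ratio f c x"
proof -
  define A where "A = f - 2 * x"
  define B where "B = f - 2 * m"
  have pos: "A > 0" "B > 0" using assms unfolding A_def B_def by auto
  have rx: "service_ratio f c x = (c + f) / A - 1"
    and rm: "service_ratio f c m = (c + f) / B - 1"
    using pos unfolding service_ratio_def A_def B_def by (simp_all add: field_simps)
  have slope: "2 * (c + f) / (f - 2 * m)\<^sup>2 * (x - m) = (c + f) * (B - A) / B\<^sup>2"
    unfolding A_def B_def by (simp add: field_simps)
  \<comment> \<open>\<open>2AB - A\<^sup>2 \<le> B\<^sup>2\<close> is \<open>(A - B)\<^sup>2 \<ge> 0\<close>.\<close>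
  have "(c + f) * (2 * A * B - A\<^sup>2) \<le> (c + f) * B\<^sup>2"
    using assms(3) sum_squares_ge_zero[of 0 "A - B"]
    by (intro mult_left_mono) (simp_all add: power2_eq_square algebra_simps)
  then have "(c + f) * (2 * A * B - A\<^sup>2) / (A * B\<^sup>2) \<le> (c + f) * B\<^sup>2 / (A * B\<^sup>2)"
    using pos by (intro divide_right_mono) auto
  moreover have "(c + f) / B + (c + f) * (B - A) / B\<^sup>2 = (c + f) * (2 * A * B - A\<^sup>2) / (A * B\<^sup>2)"
    using pos by (simp add: field_simps power2_eq_square)
  moreover have "(c + f) * B\<^sup>2 / (A * B\<^sup>2) = (c + f) / A"
    using pos by (simp add: field_simps power2_eq_square)
  ultimately show ?thesis unfolding rx rm slope by linarith
qed

lemma service_ratio_mean_le: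
  fixes x :: "'a \<Rightarrow> real"
  assumes "finite I" "I \<noteq> {}" "\<forall>i\<in>I. 2 * x i < f" "c + f \<ge> 0"
  shows "real (card I) * service_ratio f c ((\<Sum>i\<in>I. x i) / real (card I))
           \<le> (\<Sum>i\<in>I. service_ratio f c (x i))"
proof -
  define m where "m = (\<Sum>i\<in>I. x i) / real (card I)"
  define D where "D = 2 * (c + f) / (f - 2 * m)\<^sup>2"
  have card: "real (card I) > 0" using assms(1,2) by (simp add: card_gt_0_iff)
  have "m < f / 2" unfolding m_def using assms(1-3) by (intro mean_less) auto
  then have "(\<Sum>i\<in>I. service_ratio f c m + D * (x i - m)) \<le> (\<Sum>i\<in>I. service_ratio f c (x i))"
    unfolding D_def using assms(3,4) by (intro sum_mono service_ratio_above_tangent) auto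
  moreover have "(\<Sum>i\<in>I. service_ratio f c m + D * (x i - m)) = real (card I) * service_ratio f c m"
    unfolding m_def using card by (simp add: sum.distrib sum_subtractf sum_distrib_left[symmetric])
  ultimately show ?thesis unfolding m_def by simp
qed

definition loc :: "uav_plan \<Rightarrow> nat \<Rightarrow> nat" where
  "loc P k = fst (the (snd P k))"

definition arrive :: "uav_plan \<Rightarrow> nat \<Rightarrow> real" where
  "arrive P k = fst (snd (the (snd P k)))"

definition leave :: "uav_plan \<Rightarrow> nat \<Rightarrow> real" where
  "leave P k = snd (snd (the (snd P k)))"

definition depart :: "(nat \<Rightarrow> real) \<Rightarrow> uav_plan \<Rightarrow> nat \<Rightarrow> real" where
  "depart g P k = arrive P k - g (loc P k)"

text \<open>Time from leaving the RS for sortie \<open>k\<close> until the UAV is ready for the next sortie.\<close>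

definition cycle :: "(nat \<Rightarrow> real) \<Rightarrow> real \<Rightarrow> uav_plan \<Rightarrow> nat \<Rightarrow> real" where
  "cycle g c P k = leave P k - arrive P k + 2 * g (loc P k) + c"

definition started :: "uav_plan \<Rightarrow> real \<Rightarrow> nat set" where
  "started P T = {k. snd P k \<noteq> None \<and> arrive P k \<le> T}"

definition presence_until :: "uav_plan \<Rightarrow> real \<Rightarrow> nat \<Rightarrow> real" where
  "presence_until P T k = min (leave P k) T - arrive P k"

lemma valid_uav_sortie:
  assumes "valid_uav g f c N P" and "snd P k \<noteq> None"
  shows "loc P k < N \<and> arrive P k \<le> leave P k \<and>
     (if k = 0 \<and> fst P then arrive P k = 0 \<and> leave P k + g (loc P k) \<le> f
      else g (loc P k) \<le> arrive P k \<and> leave P k - arrive P k + 2 * g (loc P k) \<le> f)"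
proof -
  obtain i a l where E: "snd P k = Some (i, a, l)" using assms(2) by auto
  then have "i < N \<and> a \<le> l \<and>
      (if k = 0 \<and> fst P then a = 0 \<and> l + g i \<le> f
       else 0 \<le> a - g i \<and> (l + g i) - (a - g i) \<le> f)"
    using assms(1) unfolding valid_uav_def Let_def by blast
  then show ?thesis using E by (auto simp: loc_def arrive_def leave_def split: if_splits)
qed

lemma valid_uav_step:
  assumes "valid_uav g f c N P" and "snd P (Suc k) \<noteq> None"
  shows "snd P k \<noteq> None \<and> depart g P k + cycle g c P k \<le> depart g P (Suc k)"
proof -
  have "snd P k \<noteq> None" using assms unfolding valid_uav_def Let_def by auto
  moreover obtain i a l where E: "snd P k = Some (i, a, l)" using calculation by auto
  moreover obtain i' a' l' where E': "snd P (Suc k) = Some (i', a', l')" using assms(2) by auto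
  moreover have "l + g i + c \<le> a' - g i'"
    using assms(1) E E' unfolding valid_uav_def Let_def by blast
  ultimately show ?thesis by (simp add: loc_def arrive_def leave_def depart_def cycle_def)
qed

lemma valid_uav_prefix:
  assumes "valid_uav g f c N P" and "snd P n \<noteq> None" and "j \<le> n"
  shows "snd P j \<noteq> None"
  using assms(3,2) by (induction n) (use valid_uav_step[OF assms(1)] le_Suc_eq in auto)

lemma valid_uav_cycles_le:
  assumes "valid_uav g f c N P" and "snd P n \<noteq> None"
  shows "(\<Sum>j<n. cycle g c P j) \<le> depart g P n - depart g P 0"
  using assms(2)
proof (induction n)
  case (Suc n)
  then show ?case using valid_uav_step[OF assms(1) Suc.prems] by simp
qed simp

locale uav_instance =
  fixes g :: "nat \<Rightarrow> real" and f c :: real and N :: nat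
  assumes f_pos: "f > 0" and c_nonneg: "c \<ge> 0" and g_pos: "\<forall>i<N. g i > 0"
    and g_lt: "\<forall>i<N. 2 * g i < f"
begin

abbreviation \<rho> :: "nat \<Rightarrow> real" where
  "\<rho> i \<equiv> service_ratio f c (g i)"

text \<open>A sortie begun at a location at time 0 has no outbound flight, so its weighted presence can
  exceed its cycle by up to \<open>\<rho>\<^sub>i g\<^sub>i\<close>.\<close>

definition initial_excess :: real where
  "initial_excess = (\<Sum>i<N. \<rho> i * g i)"

lemma ratio_nonneg: "i < N \<Longrightarrow> \<rho> i \<ge> 0"
  using g_pos g_lt c_nonneg by (simp add: service_ratio_nonneg less_imp_le)

lemma initial_excess_ge: "i < N \<Longrightarrow> \<rho> i * g i \<le> initial_excess"
  unfolding initial_excess_def using ratio_nonneg g_pos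
  by (intro member_le_sum[where f = "\<lambda>i. \<rho> i * g i"]) (auto intro: less_imp_le)

lemma initial_excess_nonneg: "initial_excess \<ge> 0"
  unfolding initial_excess_def using ratio_nonneg g_pos
  by (intro sum_nonneg mult_nonneg_nonneg) (auto intro: less_imp_le)

lemma depart_ge:
  assumes "valid_uav g f c N P" and "snd P k \<noteq> None"
  shows "depart g P k \<ge> - f / 2"
  using valid_uav_sortie[OF assms] g_lt g_pos unfolding depart_def
  by (fastforce split: if_splits)

lemma cycle_bounds:
  assumes "valid_uav g f c N P" and "snd P k \<noteq> None"
  shows "cycle g c P k \<ge> 2 * g (loc P k)" "cycle g c P k \<le> 2 * f + c"
  using valid_uav_sortie[OF assms] g_lt g_pos c_nonneg unfolding cycle_def
  by (fastforce split: if_splits)+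

lemma weighted_presence_le_cycle:
  assumes V: "valid_uav g f c N P" and k: "k \<in> started P T"
  shows "(1 + \<rho> (loc P k)) * presence_until P T k
         \<le> cycle g c P k + (if k = 0 then initial_excess else 0)"
proof -
  define i where "i = loc P k"
  define x where "x = presence_until P T k"
  have "snd P k \<noteq> None" using k unfolding started_def by simp
  note S = valid_uav_sortie[OF V this]
  have iN: "i < N" using S i_def by simp
  have x: "0 \<le> x" "x \<le> leave P k - arrive P k"
    using S k unfolding x_def presence_until_def started_def by auto
  have \<rho>: "\<rho> i * (f - 2 * g i) = c + 2 * g i"
    using g_lt iN unfolding service_ratio_def by auto
  have "\<rho> i * x \<le> c + 2 * g i + (if k = 0 then initial_excess else 0)"
  proof (cases "k = 0 \<and> fst P")
    case True
    then have "\<rho> i * x \<le> \<rho> i * ((f - 2 * g i) + g i)"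
      using S x ratio_nonneg[OF iN] unfolding i_def by (intro mult_left_mono) auto
    then show ?thesis using \<rho> initial_excess_ge[OF iN] True by (simp add: algebra_simps)
  next
    case False
    then have "\<rho> i * x \<le> \<rho> i * (f - 2 * g i)"
      using S x ratio_nonneg[OF iN] unfolding i_def by (intro mult_left_mono) auto
    then show ?thesis using \<rho> initial_excess_nonneg by auto
  qed
  then show ?thesis using x unfolding i_def x_def cycle_def by (simp add: algebra_simps)
qed

lemma cycles_before_started_le:
  assumes V: "valid_uav g f c N P" and n: "n \<in> started P T"
  shows "(\<Sum>j<n. cycle g c P j) \<le> T + f / 2"
proof -
  have Sn: "snd P n \<noteq> None" and "arrive P n \<le> T" using n unfolding started_def by auto
  then have "depart g P n \<le> T"
    using valid_uav_sortie[OF V Sn] g_pos unfolding depart_def by force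
  moreover have "depart g P 0 \<ge> - f / 2"
    using depart_ge[OF V] valid_uav_prefix[OF V Sn] by simp
  ultimately show ?thesis using valid_uav_cycles_le[OF V Sn] by linarith
qed

lemma started_finite:
  assumes V: "valid_uav g f c N P" and "N > 0"
  shows "finite (started P T)"
proof -
  define \<gamma> where "\<gamma> = Min (g ` {..<N})"
  have \<gamma>: "\<gamma> > 0" "\<And>i. i < N \<Longrightarrow> \<gamma> \<le> g i"
    unfolding \<gamma>_def using \<open>N > 0\<close> g_pos by (subst Min_gr_iff) auto
  have "real n \<le> (T + f) / (2 * \<gamma>)" if n: "n \<in> started P T" for n
  proof -
    have Sn: "snd P n \<noteq> None" using n unfolding started_def by auto
    have "real n * (2 * \<gamma>) = (\<Sum>j<n. 2 * \<gamma>)" by simp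
    also have "\<dots> \<le> (\<Sum>j<n. cycle g c P j)"
    proof (rule sum_mono)
      fix j assume "j \<in> {..<n}"
      then have "snd P j \<noteq> None" using valid_uav_prefix[OF V Sn] by auto
      then show "2 * \<gamma> \<le> cycle g c P j"
        using cycle_bounds(1)[OF V] valid_uav_sortie[OF V] \<gamma>(2) by force
    qed
    also have "\<dots> \<le> T + f / 2" by (rule cycles_before_started_le[OF V n])
    finally show ?thesis using \<gamma>(1) f_pos by (simp add: pos_le_divide_eq)
  qed
  then have "started P T \<subseteq> {..nat \<lceil>(T + f) / (2 * \<gamma>)\<rceil>}"
    by (fastforce dest: ceiling_mono simp: le_nat_iff)
  then show ?thesis by (rule finite_subset) simp
qed

lemma weighted_presence_le:
  assumes V: "valid_uav g f c N P" and "N > 0" and T: "T \<ge> 0"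
  shows "(\<Sum>k\<in>started P T. (1 + \<rho> (loc P k)) * presence_until P T k)
           \<le> T + (3 * f + c + initial_excess)"
proof (cases "started P T = {}")
  case True
  then show ?thesis using f_pos c_nonneg initial_excess_nonneg T by simp
next
  case False
  let ?K = "started P T"
  have fin: "finite ?K" by (rule started_finite[OF V \<open>N > 0\<close>])
  define n where "n = Max ?K"
  have n: "n \<in> ?K" and Kn: "?K \<subseteq> {..n}" unfolding n_def using fin False by auto
  have Sn: "snd P n \<noteq> None" using n unfolding started_def by auto
  have "(\<Sum>k\<in>?K. (1 + \<rho> (loc P k)) * presence_until P T k)
      \<le> (\<Sum>k\<in>?K. cycle g c P k + (if k = 0 then initial_excess else 0))"
    by (intro sum_mono weighted_presence_le_cycle[OF V])
  also have "\<dots> = (\<Sum>k\<in>?K. cycle g c P k) + (\<Sum>k\<in>?K. (if k = 0 then initial_excess else 0))"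
    by (rule sum.distrib)
  also have "(\<Sum>k\<in>?K. (if k = 0 then initial_excess else 0)) \<le> initial_excess"
    using fin initial_excess_nonneg by (simp add: sum.delta)
  also have "(\<Sum>k\<in>?K. cycle g c P k) \<le> (\<Sum>k\<le>n. cycle g c P k)"
  proof (rule sum_mono2)
    fix k assume "k \<in> {..n} - ?K"
    then have "snd P k \<noteq> None" using valid_uav_prefix[OF V Sn] by auto
    then show "0 \<le> cycle g c P k"
      using cycle_bounds(1)[OF V] valid_uav_sortie[OF V] g_pos by (smt (verit))
  qed (use Kn in auto)
  also have "(\<Sum>k\<le>n. cycle g c P k) = (\<Sum>k<n. cycle g c P k) + cycle g c P n"
    by (simp add: lessThan_Suc_atMost[symmetric])
  also have "\<dots> \<le> (T + f / 2) + (2 * f + c)"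
    using cycles_before_started_le[OF V n] cycle_bounds(2)[OF V Sn] by linarith
  finally show ?thesis using f_pos by simp
qed

lemma covered_presence_ge:
  assumes feas: "feasible g f c N M U" and "N > 0" and i: "i < N" and T: "T \<ge> 0"
  shows "T \<le> (\<Sum>(u, k)\<in>{(u, k). u < M \<and> k \<in> started (U u) T \<and> loc (U u) k = i}.
                presence_until (U u) T k)"
proof -
  let ?S = "{(u, k). u < M \<and> k \<in> started (U u) T \<and> loc (U u) k = i}"
  have V: "\<And>u. u < M \<Longrightarrow> valid_uav g f c N (U u)" using feas unfolding feasible_def by auto
  have "?S \<subseteq> Sigma {..<M} (\<lambda>u. started (U u) T)" by auto
  then have fin: "finite ?S"
    by (rule finite_subset) (use started_finite[OF V \<open>N > 0\<close>] in auto)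
  have "{0..T} \<subseteq> (\<Union>(u, k)\<in>?S. {arrive (U u) k..min (leave (U u) k) T})"
  proof
    fix t assume t: "t \<in> {0..T}"
    have "\<exists>u<M. present (U u) i t" using feas i t unfolding feasible_def by simp
    then obtain u where u: "u < M" "present (U u) i t" by blast
    then obtain k a l where kal: "snd (U u) k = Some (i, a, l)" "a \<le> t" "t \<le> l"
      unfolding present_def by auto
    then have "(u, k) \<in> ?S" and "t \<in> {arrive (U u) k..min (leave (U u) k) T}"
      using u t by (auto simp: started_def loc_def arrive_def leave_def)
    then show "t \<in> (\<Union>(u, k)\<in>?S. {arrive (U u) k..min (leave (U u) k) T})" by blast
  qed
  moreover have "\<forall>(u, k)\<in>?S. arrive (U u) k \<le> min (leave (U u) k) T"
    using valid_uav_sortie[OF V] by (auto simp: started_def)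
  ultimately show ?thesis
    using interval_cover_length_le[OF fin T, of "\<lambda>(u, k). arrive (U u) k"
        "\<lambda>(u, k). min (leave (U u) k) T"]
    by (simp add: case_prod_unfold presence_until_def)
qed

lemma fleet_weighted_presence_bound:
  assumes feas: "feasible g f c N M U" and "N > 0" and T: "T \<ge> 0"
  shows "T * (real N + (\<Sum>i<N. \<rho> i)) \<le> T * real M + real M * (3 * f + c + initial_excess)"
proof -
  define S where "S = Sigma {..<M} (\<lambda>u. started (U u) T)"
  define A where "A i = {(u, k). u < M \<and> k \<in> started (U u) T \<and> loc (U u) k = i}" for i
  define w where "w u k = (1 + \<rho> (loc (U u) k)) * presence_until (U u) T k" for u k
  have V: "\<And>u. u < M \<Longrightarrow> valid_uav g f c N (U u)" using feas unfolding feasible_def by auto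
  have fin: "\<And>u. u < M \<Longrightarrow> finite (started (U u) T)" by (rule started_finite[OF V \<open>N > 0\<close>])
  have A_eq: "A i = {s \<in> S. (\<lambda>(u, k). loc (U u) k) s = i}" for i
    unfolding A_def S_def by auto
  have "T * (real N + (\<Sum>i<N. \<rho> i)) = (\<Sum>i<N. (1 + \<rho> i) * T)"
    by (simp add: sum.distrib sum_distrib_left algebra_simps)
  also have "\<dots> \<le> (\<Sum>i<N. \<Sum>(u, k)\<in>A i. w u k)"
  proof (rule sum_mono)
    fix i assume i: "i \<in> {..<N}"
    have "(1 + \<rho> i) * T \<le> (1 + \<rho> i) * (\<Sum>(u, k)\<in>A i. presence_until (U u) T k)"
      using covered_presence_ge[OF feas \<open>N > 0\<close> _ T, of i] ratio_nonneg[of i] i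
      unfolding A_def by (intro mult_left_mono) auto
    also have "\<dots> = (\<Sum>(u, k)\<in>A i. w u k)"
      unfolding sum_distrib_left by (intro sum.cong refl) (auto simp: A_def w_def)
    finally show "(1 + \<rho> i) * T \<le> (\<Sum>(u, k)\<in>A i. w u k)" .
  qed
  also have "\<dots> = (\<Sum>(u, k)\<in>S. w u k)"
    unfolding A_eq using valid_uav_sortie[OF V] fin
    by (intro sum.group) (auto simp: S_def started_def)
  also have "\<dots> = (\<Sum>u<M. \<Sum>k\<in>started (U u) T. w u k)"
    unfolding S_def by (rule sum.Sigma[symmetric]) (use fin in auto)
  also have "\<dots> \<le> (\<Sum>u<M. T + (3 * f + c + initial_excess))"
    unfolding w_def using weighted_presence_le[OF V \<open>N > 0\<close> T] by (intro sum_mono) simp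
  finally show ?thesis by (simp add: algebra_simps)
qed

end

theorem theorem5:
  fixes N M :: nat and f c :: real and g :: "nat \<Rightarrow> real"
    and U :: "nat \<Rightarrow> uav_plan"
  assumes "f > 0" and "c \<ge> 0"
    and "\<forall>i<N. g i > 0" and "\<forall>i<N. 2 * g i < f"
    and "feasible g f c N M U"
  shows "M \<ge> M_hom f c N ((\<Sum>i<N. g i) / real N)"
proof (cases "N = 0")
  case True
  then show ?thesis by (simp add: M_hom_def)
next
  case False
  interpret uav_instance g f c N using assms by unfold_locales auto
  define gbar where "gbar = (\<Sum>i<N. g i) / real N"
  have "real (card {..<N}) * service_ratio f c ((\<Sum>i<N. g i) / real (card {..<N}))
      \<le> (\<Sum>i<N. service_ratio f c (g i))"
    by (rule service_ratio_mean_le) (use False assms(1,2,4) in auto)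
  then have mean: "real N * service_ratio f c gbar \<le> (\<Sum>i<N. service_ratio f c (g i))"
    unfolding gbar_def by simp
  have fleet: "real N + (\<Sum>i<N. service_ratio f c (g i)) \<le> real M"
    by (rule le_of_linear_bound, rule fleet_weighted_presence_bound[OF assms(5)]) (use False in auto)
  have "(\<Sum>i<N. g i) / real (card {..<N}) < f / 2"
    by (rule mean_less) (use False assms(4) in auto)
  then have "gbar < f / 2" unfolding gbar_def by simp
  moreover have "gbar \<ge> 0"
    unfolding gbar_def using assms(3) by (intro divide_nonneg_nonneg sum_nonneg) (auto intro: less_imp_le)
  ultimately have "service_ratio f c gbar \<ge> 0"
    using c_nonneg by (intro service_ratio_nonneg) auto
  moreover have "real N + service_ratio f c gbar * real N \<le> real M"
    using mean fleet by (simp add: mult.commute)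
  ultimately show ?thesis
    unfolding M_hom_def gbar_def[symmetric] service_ratio_def[symmetric]
    by (intro add_nat_ceiling_le) (simp_all add: mult_nonneg_nonneg)
qed

end
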